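(* For all $y_1,y_2\in\mathcal{Y}$ and all $\lambda>0$, $$\mathrm{EUBO}_\lambda(y_1,y_2)\;\ge\;\mathrm{EUBO}_0(y_1,y_2)-\lambda C,\qquad C=\frac{e^{-1/2}}{\sqrt{2}}.$$
   Context: Let $\mathcal{Y}\subseteq\mathbb{R}^k$. Let $g$ be a random function on $\mathbb{R}^k$ distributed as a Gaussian process; all probabilities and expectations are with respect to the law of $g$ and of the response below. For a query $(y_1,y_2)$ and noise level $\lambda\ge0$, the response $r(y_1,y_2)\in\{1,2\}$ is random with: if $\lambda>0$, $\mathbb{P}(r(y_1,y_2)=1\mid g)=\Phi\big((g(y_1)-g(y_2))/(\sqrt{2}\lambda)\big)$ and $\mathbb{P}(r(y_1,y_2)=2\mid g)=1-\mathbb{P}(r(y_1,y_2)=1\mid g)$, where $\Phi$ is the standard normal CDF; if $\lambda=0$, $r(y_1,y_2)=1$ when $g(y_1)>g(y_2)$ and $2$ when $g(y_1)<g(y_2)$ (ties arbitrary). Define $\mathrm{EUBO}_\lambda(y_1,y_2)=\mathbb{E}[g(y_{r(y_1,y_2)})]$, i.e. the expected utility of the option chosen by the response; in particular $\mathrm{EUBO}_0(y_1,y_2)=\mathbb{E}[\max\{g(y_1),g(y_2)\}]$. *)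

theory Defs
  imports "HOL-Probability.Probability"
begin

definition Phi :: "real \<Rightarrow> real" where
  "Phi x = (LBINT t:{..x}. std_normal_density t)"

definition gaussian_rv :: "'w measure \<Rightarrow> ('w \<Rightarrow> real) \<Rightarrow> bool" where
  "gaussian_rv M X \<longleftrightarrow>
     X \<in> borel_measurable M \<and>
     ((\<exists>\<mu> \<sigma>. \<sigma> > 0 \<and> distributed M lborel X (normal_density \<mu> \<sigma>))
      \<or> (\<exists>c. AE \<omega> in M. X \<omega> = c))"

definition gaussian_process :: "'w measure \<Rightarrow> ('y \<Rightarrow> 'w \<Rightarrow> real) \<Rightarrow> bool" where
  "gaussian_process M g \<longleftrightarrow> prob_space M \<and>
     (\<forall>S a. finite S \<longrightarrow> gaussian_rv M (\<lambda>\<omega>. \<Sum>y\<in>S. a y * g y \<omega>))"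

(* Probability (conditional on g) that the response to (y1,y2) is 1, for noise lambda > 0 *)
definition resp1_prob :: "real \<Rightarrow> real \<Rightarrow> real \<Rightarrow> real" where
  "resp1_prob lam u v = Phi ((u - v) / (sqrt 2 * lam))"

(* EUBO_lambda(y1,y2) = E[g(y_r)] = E[ E[g(y_r) | g] ]
   = E[ g(y1) P(r=1|g) + g(y2) P(r=2|g) ]  for lambda > 0 *)
definition EUBO :: "'w measure \<Rightarrow> ('y \<Rightarrow> 'w \<Rightarrow> real) \<Rightarrow> real \<Rightarrow> 'y \<Rightarrow> 'y \<Rightarrow> real" where
  "EUBO M g lam y1 y2 =
     (if lam = 0 then (\<integral>\<omega>. max (g y1 \<omega>) (g y2 \<omega>) \<partial>M)
      else (\<integral>\<omega>. g y1 \<omega> * resp1_prob lam (g y1 \<omega>) (g y2 \<omega>)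
               + g y2 \<omega> * (1 - resp1_prob lam (g y1 \<omega>) (g y2 \<omega>)) \<partial>M))"

end

theory Submission
  imports Defs
begin

text \<open>Conditionally on \<open>g\<close>, write \<open>d = g y\<^sub>1 - g y\<^sub>2\<close> and let \<open>Q\<close> be the standard normal
  tail. The noisy response loses the gap \<open>\<bar>d\<bar>\<close> against \<open>max (g y\<^sub>1) (g y\<^sub>2)\<close> exactly when it
  picks the worse option, which happens with probability \<open>Q (\<bar>d\<bar> / (sqrt 2 * \<lambda>))\<close>.
  Shifting the integral that defines \<open>Q\<close> gives \<open>Q x \<le> exp (- x\<^sup>2 / 2) / 2\<close> for \<open>x \<ge> 0\<close>, and
  \<open>x * exp (- x\<^sup>2 / 2) \<le> exp (- 1 / 2)\<close>, so the loss is at most \<open>\<lambda> * exp (- 1 / 2) / sqrt 2\<close>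
  for every realisation of \<open>g\<close>. Integrating proves the theorem; Gaussianity of the process
  only serves to make \<open>g y\<^sub>1\<close> and \<open>g y\<^sub>2\<close> integrable.\<close>

definition std_normal_tail :: "real \<Rightarrow> real" where
  "std_normal_tail x = (LBINT t:{x<..}. std_normal_density t)"

lemma set_integrable_std_normal_density:
  "A \<in> sets borel \<Longrightarrow> set_integrable lborel A std_normal_density"
  using integrable_real_mult_indicator[of A lborel std_normal_density]
  by (simp add: set_integrable_def mult.commute)

lemma Phi_eq_1_minus_tail: "Phi x = 1 - std_normal_tail x"
proof -
  have "(\<lambda>t. indicator {..x} t * std_normal_density t + indicator {x<..} t * std_normal_density t)
      = std_normal_density"
    by (auto simp: fun_eq_iff split: split_indicator)
  then have "1 = (\<integral>t. indicator {..x} t * std_normal_density t + indicator {x<..} t * std_normal_density t \<partial>lborel)"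
    using integral_std_normal_moment_even[of 0] by simp
  also have "\<dots> = Phi x + std_normal_tail x"
    using set_integrable_std_normal_density[of "{..x}"] set_integrable_std_normal_density[of "{x<..}"]
    by (simp add: Phi_def std_normal_tail_def set_lebesgue_integral_def set_integrable_def)
  finally show ?thesis by simp
qed

lemma Phi_minus: "Phi (-x) = std_normal_tail x"
proof -
  have "Phi (-x) = (\<integral>t. indicator {..-x} (-t) * std_normal_density (-t) \<partial>lborel)"
    using lborel_integral_real_affine[where c="-1" and t=0 and f="\<lambda>t. indicator {..-x} t * std_normal_density t"]
    by (simp add: Phi_def set_lebesgue_integral_def)
  also have "\<dots> = std_normal_tail x"
    unfolding std_normal_tail_def set_lebesgue_integral_def
    using AE_lborel_singleton[of x]
    by (intro integral_cong_AE) (auto elim!: eventually_mono simp: normal_density_def split: split_indicator)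
  finally show ?thesis .
qed

lemma std_normal_tail_0: "std_normal_tail 0 = 1/2"
  using Phi_eq_1_minus_tail[of 0] Phi_minus[of 0] by simp

lemma std_normal_tail_nonneg: "0 \<le> std_normal_tail x"
  unfolding std_normal_tail_def set_lebesgue_integral_def
  by (intro Bochner_Integration.integral_nonneg) (auto split: split_indicator)

lemma Phi_nonneg: "0 \<le> Phi x"
  using std_normal_tail_nonneg[of "-x"] by (simp flip: Phi_minus)

lemma Phi_le_1: "Phi x \<le> 1"
  using Phi_eq_1_minus_tail[of x] std_normal_tail_nonneg[of x] by simp

lemma mono_Phi: "mono Phi"
proof
  fix x y :: real assume "x \<le> y"
  then show "Phi x \<le> Phi y"
    unfolding Phi_def set_lebesgue_integral_def
    using set_integrable_std_normal_density[of "{..x}"] set_integrable_std_normal_density[of "{..y}"]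
    by (intro integral_mono) (auto simp: set_integrable_def split: split_indicator)
qed

lemma borel_measurable_Phi[measurable]: "Phi \<in> borel_measurable borel"
  using mono_Phi by (rule borel_measurable_mono)

lemma std_normal_tail_le:
  assumes "0 \<le> x" shows "std_normal_tail x \<le> exp (- x\<^sup>2 / 2) / 2"
proof -
  have "std_normal_tail x = (\<integral>u. indicator {x<..} (x + u) * std_normal_density (x + u) \<partial>lborel)"
    using lborel_integral_real_affine[where c=1 and t=x and f="\<lambda>t. indicator {x<..} t * std_normal_density t"]
    by (simp add: std_normal_tail_def set_lebesgue_integral_def)
  also have "\<dots> \<le> (\<integral>u. exp (- x\<^sup>2 / 2) * (indicator {0<..} u * std_normal_density u) \<partial>lborel)"
  proof (rule integral_mono)
    show "integrable lborel (\<lambda>u. indicator {x<..} (x + u) * std_normal_density (x + u))"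
      using lborel_integrable_real_affine[of "\<lambda>t. indicator {x<..} t * std_normal_density t" 1 x]
        set_integrable_std_normal_density[of "{x<..}"]
      by (simp add: set_integrable_def)
    show "integrable lborel (\<lambda>u. exp (- x\<^sup>2 / 2) * (indicator {0<..} u * std_normal_density u))"
      using set_integrable_std_normal_density[of "{0<..}"] by (simp add: set_integrable_def)
    fix u
    have "std_normal_density (x + u) = exp (- x\<^sup>2 / 2) * exp (- (x * u)) * std_normal_density u"
      by (simp add: std_normal_density_def power2_eq_square field_simps flip: exp_add)
    moreover have "exp (- (x * u)) * std_normal_density u \<le> std_normal_density u" if "0 < u"
      using assms that by (intro mult_left_le_one_le) auto
    ultimately show "indicator {x<..} (x + u) * std_normal_density (x + u)
        \<le> exp (- x\<^sup>2 / 2) * (indicator {0<..} u * std_normal_density u)"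
      by (auto split: split_indicator)
  qed
  also have "\<dots> = exp (- x\<^sup>2 / 2) / 2"
    using std_normal_tail_0 by (simp add: std_normal_tail_def set_lebesgue_integral_def)
  finally show ?thesis .
qed

lemma mult_exp_neg_square_half_le: "(x::real) * exp (- x\<^sup>2 / 2) \<le> exp (- 1 / 2)"
proof -
  have "x \<le> 1 + (x\<^sup>2 - 1) / 2"
    using zero_le_power2[of "x - 1"] by (simp add: power2_eq_square field_simps)
  also have "\<dots> \<le> exp ((x\<^sup>2 - 1) / 2)"
    by (rule exp_ge_add_one_self)
  finally have "x * exp (- x\<^sup>2 / 2) \<le> exp ((x\<^sup>2 - 1) / 2) * exp (- x\<^sup>2 / 2)"
    by (intro mult_right_mono) auto
  also have "\<dots> = exp (- 1 / 2)"
    by (simp add: diff_divide_distrib flip: exp_add)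
  finally show ?thesis .
qed

lemma mult_std_normal_tail_le:
  assumes "0 \<le> x" shows "x * std_normal_tail x \<le> exp (- 1 / 2) / 2"
proof -
  have "x * std_normal_tail x \<le> x * (exp (- x\<^sup>2 / 2) / 2)"
    using std_normal_tail_le[OF assms] assms by (rule mult_left_mono)
  also have "\<dots> \<le> exp (- 1 / 2) / 2"
    using mult_exp_neg_square_half_le[of x] by simp
  finally show ?thesis .
qed

definition expected_choice :: "real \<Rightarrow> real \<Rightarrow> real \<Rightarrow> real" where
  "expected_choice lam u v = u * resp1_prob lam u v + v * (1 - resp1_prob lam u v)"

lemma EUBO_eq_integral_expected_choice:
  "lam \<noteq> 0 \<Longrightarrow> EUBO M g lam y1 y2 = (\<integral>\<omega>. expected_choice lam (g y1 \<omega>) (g y2 \<omega>) \<partial>M)"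
  by (simp add: EUBO_def expected_choice_def)

lemma borel_measurable_expected_choice[measurable]:
  assumes [measurable]: "f \<in> borel_measurable M" "h \<in> borel_measurable M"
  shows "(\<lambda>\<omega>. expected_choice lam (f \<omega>) (h \<omega>)) \<in> borel_measurable M"
  unfolding expected_choice_def resp1_prob_def by measurable

lemma abs_expected_choice_le: "\<bar>expected_choice lam u v\<bar> \<le> \<bar>u\<bar> + \<bar>v\<bar>"
proof -
  define p where "p = resp1_prob lam u v"
  have "0 \<le> p" "p \<le> 1"
    unfolding p_def resp1_prob_def using Phi_nonneg Phi_le_1 by auto
  then have "\<bar>u * p + v * (1 - p)\<bar> \<le> \<bar>u\<bar> * p + \<bar>v\<bar> * (1 - p)"
    by (metis abs_mult abs_of_nonneg abs_triangle_ineq diff_ge_0_iff_ge)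
  also have "\<dots> \<le> \<bar>u\<bar> + \<bar>v\<bar>"
    using \<open>0 \<le> p\<close> \<open>p \<le> 1\<close> by (intro add_mono mult_left_le) auto
  finally show ?thesis by (simp add: expected_choice_def p_def)
qed

lemma integrable_expected_choice:
  assumes "integrable M f" "integrable M h"
  shows "integrable M (\<lambda>\<omega>. expected_choice lam (f \<omega>) (h \<omega>))"
proof (rule Bochner_Integration.integrable_bound)
  show "integrable M (\<lambda>\<omega>. \<bar>f \<omega>\<bar> + \<bar>h \<omega>\<bar>)"
    using assms by auto
  show "(\<lambda>\<omega>. expected_choice lam (f \<omega>) (h \<omega>)) \<in> borel_measurable M"
    using assms by (intro borel_measurable_expected_choice borel_measurable_integrable)
  show "AE \<omega> in M. norm (expected_choice lam (f \<omega>) (h \<omega>)) \<le> norm (\<bar>f \<omega>\<bar> + \<bar>h \<omega>\<bar>)"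
    using abs_expected_choice_le by simp
qed

lemma max_minus_expected_choice:
  "max u v - expected_choice lam u v = \<bar>u - v\<bar> * std_normal_tail (\<bar>u - v\<bar> / (sqrt 2 * lam))"
proof (cases "v \<le> u")
  case True
  then show ?thesis
    by (simp add: expected_choice_def resp1_prob_def Phi_eq_1_minus_tail algebra_simps)
next
  case False
  then have "\<bar>u - v\<bar> / (sqrt 2 * lam) = - ((u - v) / (sqrt 2 * lam))"
    by (simp add: minus_divide_left)
  then have "resp1_prob lam u v = std_normal_tail (\<bar>u - v\<bar> / (sqrt 2 * lam))"
    by (simp add: resp1_prob_def flip: Phi_minus)
  with False show ?thesis
    by (simp add: expected_choice_def algebra_simps)
qed

lemma expected_choice_ge:
  assumes "lam > 0"
  shows "expected_choice lam u v \<ge> max u v - lam * (exp (-1/2) / sqrt 2)"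
proof -
  define s where "s = sqrt 2 * lam"
  define x where "x = \<bar>u - v\<bar> / s"
  have "s > 0" using assms by (simp add: s_def)
  then have "max u v - expected_choice lam u v = s * (x * std_normal_tail x)"
    by (simp add: max_minus_expected_choice x_def flip: s_def)
  also have "\<dots> \<le> s * (exp (- 1 / 2) / 2)"
    using \<open>s > 0\<close> by (intro mult_left_mono mult_std_normal_tail_le) (auto simp: x_def)
  also have "\<dots> = lam * (exp (-1/2) / sqrt 2)"
    by (simp add: s_def field_simps flip: real_sqrt_mult)
  finally show ?thesis by simp
qed

lemma integrable_gaussian_rv:
  assumes "prob_space M" and "gaussian_rv M X"
  shows "integrable M X"
proof -
  interpret prob_space M by fact
  have [measurable]: "X \<in> borel_measurable M"
    using assms(2) unfolding gaussian_rv_def by blast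
  from assms(2) consider (normal) \<mu> \<sigma> where "\<sigma> > 0" "distributed M lborel X (normal_density \<mu> \<sigma>)"
    | (degenerate) c where "AE \<omega> in M. X \<omega> = c"
    unfolding gaussian_rv_def by blast
  then show ?thesis
  proof cases
    case normal
    have "integrable lborel (\<lambda>x. normal_density \<mu> \<sigma> x * id x)"
      using integrable_normal_moment_nz_1 normal(1) by simp
    then show ?thesis
      using distributed_integrable[OF normal(2), of id] by simp
  next
    case degenerate
    moreover have "integrable M (\<lambda>_. c)"
      by simp
    ultimately show ?thesis
      using integrable_cong_AE[of X M "\<lambda>_. c"] by simp
  qed
qed

lemma integrable_gaussian_process:
  assumes "gaussian_process M g"
  shows "integrable M (g y)"
proof -
  have "\<forall>S a. finite S \<longrightarrow> gaussian_rv M (\<lambda>\<omega>. \<Sum>y\<in>S. a y * g y \<omega>)"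
    using assms unfolding gaussian_process_def by (rule conjunct2)
  from this[rule_format, of "{y}" "\<lambda>_. 1"] have "gaussian_rv M (g y)"
    by simp
  moreover have "prob_space M"
    using assms by (simp add: gaussian_process_def)
  ultimately show ?thesis
    by (intro integrable_gaussian_rv)
qed

theorem mainTheorem4:
  fixes M :: "'w measure"
    and g :: "real ^ 'k \<Rightarrow> 'w \<Rightarrow> real"
    and Y :: "(real ^ 'k) set"
    and y1 y2 :: "real ^ 'k"
    and lam :: real
  assumes "gaussian_process M g"
    and "y1 \<in> Y" and "y2 \<in> Y"
    and "lam > 0"
  shows "EUBO M g lam y1 y2 \<ge> EUBO M g 0 y1 y2 - lam * (exp (-1/2) / sqrt 2)"
proof -
  interpret prob_space M
    using assms(1) by (simp add: gaussian_process_def)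
  let ?C = "lam * (exp (-1/2) / sqrt 2)"
  let ?choice = "\<lambda>\<omega>. expected_choice lam (g y1 \<omega>) (g y2 \<omega>)"
  have g: "integrable M (g y)" for y
    using assms(1) by (rule integrable_gaussian_process)
  have max_int: "integrable M (\<lambda>\<omega>. max (g y1 \<omega>) (g y2 \<omega>))"
    using g by auto
  have choice_int: "integrable M ?choice"
    using g by (intro integrable_expected_choice)
  have "EUBO M g 0 y1 y2 - ?C = (\<integral>\<omega>. max (g y1 \<omega>) (g y2 \<omega>) - ?C \<partial>M)"
    using max_int by (simp add: EUBO_def prob_space)
  also have "\<dots> \<le> (\<integral>\<omega>. ?choice \<omega> \<partial>M)"
    using max_int choice_int expected_choice_ge[OF assms(4)]
    by (intro integral_mono) (auto simp: algebra_simps)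
  also have "\<dots> = EUBO M g lam y1 y2"
    using assms(4) by (simp add: EUBO_eq_integral_expected_choice)
  finally show ?thesis .
qed

end
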